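(* Let $B_1$ and $B_2$ be rook equivalent Ferrers boards, both written with $n$ columns, such that $\{B_1,B_2\}$ is an edge of the rook equivalence graph. Then the root vectors $\xi(B_1)$ and $\xi(B_2)$ differ only in two positions, whose entries are swapped. That is, if $\xi(B_1)=\langle z_1,\ldots,z_{i_1},\ldots,z_{i_2},\ldots,z_n\rangle$ then $\xi(B_2)=\langle z_1,\ldots,z_{i_2},\ldots,z_{i_1},\ldots,z_n\rangle$ for some $1\le i_1<i_2\le n$ with $z_{i_1}\neq z_{i_2}$.
   Context: A Ferrers board is given by a weakly increasing sequence of non-negative integers $B=(b_1,\ldots,b_n)$ of column heights; it is the set of unit cells in the first quadrant lying in column $i$ and rows $1,\ldots,b_i$. Prepending columns of height $0$ on the left does not change the board, and boards are compared using the same number of columns by such padding. A placement of $k$ rooks on $B$ is a set of $k$ cells of $B$ no two in the same row or column; $r_k(B)$ is the number of such placements. Two boards are rook equivalent ($B_1\equiv B_2$) if $r_k(B_1)=r_k(B_2)$ for all $k\ge 0$. The root vector of $B=(b_1,\ldots,b_n)$ is $\xi(B)=\langle 0-b_1,1-b_2,\ldots,(n-1)-b_n\rangle$. The rook equivalence graph of the class of $B$ has as vertices all Ferrers boards rook equivalent to $B$, and $\{B_1,B_2\}$ is an edge iff, written with the same number of columns, $B_1$ and $B_2$ differ in exactly two columns $i$ and $j$, where $B_1$ has $k$ more cells than $B_2$ in column $i$ and $k$ fewer cells than $B_2$ in column $j$, for some $k>0$ (i.e. one is obtained from the other by moving $k$ cells from the top of one column to the top of another). *)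

theory Defs
  imports Main
begin

(* A Ferrers board with n columns: a list of column heights of length n,
   weakly increasing. Columns are 0-indexed here (column i of the paper is index i-1). *)
definition ferrers :: "nat list \<Rightarrow> bool" where
  "ferrers B \<longleftrightarrow> sorted B"

definition cells :: "nat list \<Rightarrow> (nat \<times> nat) set" where
  "cells B = {(i, j). i < length B \<and> 1 \<le> j \<and> j \<le> B ! i}"

definition rook_placement :: "nat list \<Rightarrow> nat \<Rightarrow> (nat \<times> nat) set \<Rightarrow> bool" where
  "rook_placement B k P \<longleftrightarrow> P \<subseteq> cells B \<and> card P = k \<and>
     (\<forall>c\<in>P. \<forall>d\<in>P. c \<noteq> d \<longrightarrow> fst c \<noteq> fst d \<and> snd c \<noteq> snd d)"

definition rook_number :: "nat list \<Rightarrow> nat \<Rightarrow> nat" where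
  "rook_number B k = card {P. rook_placement B k P}"

definition rook_equiv :: "nat list \<Rightarrow> nat list \<Rightarrow> bool" where
  "rook_equiv B1 B2 \<longleftrightarrow> (\<forall>k. rook_number B1 k = rook_number B2 k)"

definition root_vector :: "nat list \<Rightarrow> int list" where
  "root_vector B = map (\<lambda>i. int i - int (B ! i)) [0..<length B]"

definition rook_edge :: "nat list \<Rightarrow> nat list \<Rightarrow> bool" where
  "rook_edge B1 B2 \<longleftrightarrow> length B1 = length B2 \<and>
     (\<exists>i j k. i < length B1 \<and> j < length B1 \<and> i \<noteq> j \<and> k > 0 \<and>
        B1 ! i = B2 ! i + k \<and> B1 ! j + k = B2 ! j \<and>
        (\<forall>l<length B1. l \<noteq> i \<longrightarrow> l \<noteq> j \<longrightarrow> B1 ! l = B2 ! l))"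

end

(* The first two rook numbers determine the first two power sums of the root vector z:
   r_1 is the number m of cells, and for a Ferrers board with n columns
     2 r_2 + (sum of z_p^2) = m^2 - 2 (n - 1) m + (sum of p^2 for p < n).
   Along an edge, k cells move from column i to column j, so only z_i and z_j change, to
   z_i + k and z_j - k. Two pairs with equal sums and equal sums of squares coincide as
   multisets, and z_i + k differs from z_i, so the two entries are swapped. *)
theory Submission imports Defs begin

lemma card_distinct_pairs_atLeastAtMost:
  "card {(r, s). r \<in> {1..a} \<and> s \<in> {1..b} \<and> r \<noteq> s} = a * b - min a b"
proof -
  have "{(r, s). r \<in> {1..a} \<and> s \<in> {1..b} \<and> r \<noteq> s} =
      {1..a} \<times> {1..b} - (\<lambda>r. (r, r)) ` {1..min a b}"
    by auto
  moreover have "card ((\<lambda>r. (r, r)) ` {1..min a b}) = min a b"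
    by (subst card_image) (auto simp: inj_on_def)
  moreover have "(\<lambda>r. (r, r)) ` {1..min a b} \<subseteq> {1..a} \<times> {1..b}"
    by auto
  ultimately show ?thesis
    by (simp add: card_Diff_subset finite_subset card_cartesian_product)
qed

lemma card_cells: "card (cells B) = sum_list B"
proof -
  have "cells B = (SIGMA i:{..<length B}. {1..B ! i})"
    by (auto simp: cells_def)
  then show ?thesis
    by (simp add: card_SigmaI sum_list_sum_nth atLeast0LessThan)
qed

lemma rook_number_1: "rook_number B 1 = sum_list B"
proof -
  have "{P. rook_placement B 1 P} = (\<lambda>c. {c}) ` cells B"
    by (auto simp: rook_placement_def card_1_singleton_iff)
  then show ?thesis
    by (simp add: rook_number_def card_image card_cells)
qed

definition nonattacking_pairs :: "nat list \<Rightarrow> ((nat \<times> nat) \<times> (nat \<times> nat)) set" where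
  "nonattacking_pairs B =
     {(c, d). c \<in> cells B \<and> d \<in> cells B \<and> fst c < fst d \<and> snd c \<noteq> snd d}"

lemma rook_placements_2_eq:
  "{P. rook_placement B 2 P} = (\<lambda>(c, d). {c, d}) ` nonattacking_pairs B"
proof (intro set_eqI iffI)
  fix P assume "P \<in> {P. rook_placement B 2 P}"
  then obtain c d where P: "P = {c, d}" "c \<noteq> d"
    and "c \<in> cells B" "d \<in> cells B" "fst c \<noteq> fst d" "snd c \<noteq> snd d"
    by (auto simp: rook_placement_def card_2_iff)
  then have "(c, d) \<in> nonattacking_pairs B \<or> (d, c) \<in> nonattacking_pairs B"
    by (auto simp: nonattacking_pairs_def)
  with P show "P \<in> (\<lambda>(c, d). {c, d}) ` nonattacking_pairs B"
    by (auto simp: insert_commute)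
next
  fix P assume "P \<in> (\<lambda>(c, d). {c, d}) ` nonattacking_pairs B"
  then show "P \<in> {P. rook_placement B 2 P}"
    by (auto simp: nonattacking_pairs_def rook_placement_def)
qed

lemma rook_number_2:
  "rook_number B 2 = (\<Sum>q<length B. \<Sum>p<q. B ! p * B ! q - min (B ! p) (B ! q))"
proof -
  define D where "D p q = {(r, s). r \<in> {1..B ! p} \<and> s \<in> {1..B ! q} \<and> r \<noteq> s}" for p q
  have finite_D: "finite (D p q)" for p q
    by (rule finite_subset[of _ "{1..B ! p} \<times> {1..B ! q}"]) (auto simp: D_def)
  have "inj_on (\<lambda>(c, d). {c, d}) (nonattacking_pairs B)"
    by (auto simp: inj_on_def nonattacking_pairs_def doubleton_eq_iff)
  then have "rook_number B 2 = card (nonattacking_pairs B)"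
    by (simp add: rook_number_def rook_placements_2_eq card_image)
  also have "nonattacking_pairs B = (\<lambda>(q, p, r, s). ((p, r), (q, s))) `
      (SIGMA q:{..<length B}. SIGMA p:{..<q}. D p q)"
    by (auto simp: nonattacking_pairs_def cells_def D_def image_iff)
  also have "card \<dots> = card (SIGMA q:{..<length B}. SIGMA p:{..<q}. D p q)"
    by (rule card_image) (auto simp: inj_on_def)
  also have "\<dots> = (\<Sum>q<length B. \<Sum>p<q. card (D p q))"
    by (simp add: card_SigmaI finite_D)
  finally show ?thesis
    unfolding D_def card_distinct_pairs_atLeastAtMost .
qed

lemma pair_sum_root_squares_identity:
  fixes f :: "nat \<Rightarrow> 'a::comm_ring_1"
  shows "2 * (\<Sum>q<n. \<Sum>p<q. f p * (f q - 1)) + (\<Sum>p<n. (of_nat p - f p)\<^sup>2) =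
    (\<Sum>p<n. f p)\<^sup>2 - 2 * (of_nat n - 1) * (\<Sum>p<n. f p) + (\<Sum>p<n. (of_nat p)\<^sup>2)"
proof (induction n)
  case (Suc n)
  have new_column: "(\<Sum>p<n. f p * (f n - 1)) = (\<Sum>p<n. f p) * (f n - 1)"
    by (simp add: sum_distrib_right)
  from Suc.IH show ?case
    unfolding sum.lessThan_Suc new_column by (simp add: power2_eq_square algebra_simps)
qed simp

lemma length_root_vector [simp]: "length (root_vector B) = length B"
  by (simp add: root_vector_def)

lemma nth_root_vector [simp]: "p < length B \<Longrightarrow> root_vector B ! p = int p - int (B ! p)"
  by (simp add: root_vector_def)

lemma sum_list_map_root_vector:
  "sum_list (map g (root_vector B)) = (\<Sum>p<length B. g (int p - int (B ! p)))"
  by (simp add: root_vector_def sum_set_upt_conv_sum_list_nat[symmetric] atLeast0LessThan)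

lemma sum_list_root_vector:
  "sum_list (root_vector B) = (\<Sum>p<length B. int p) - int (sum_list B)"
  using sum_list_map_root_vector[of "\<lambda>z. z" B]
  by (simp add: sum_subtractf sum_list_sum_nth atLeast0LessThan)

lemma sum_squares_root_vector:
  assumes "sorted B"
  shows "2 * int (rook_number B 2) + sum_list (map (\<lambda>z. z\<^sup>2) (root_vector B)) =
    (int (sum_list B))\<^sup>2 - 2 * (int (length B) - 1) * int (sum_list B) + (\<Sum>p<length B. (int p)\<^sup>2)"
proof -
  have "int (rook_number B 2) = (\<Sum>q<length B. \<Sum>p<q. int (B ! p) * (int (B ! q) - 1))"
    unfolding rook_number_2 of_nat_sum
  proof (intro sum.cong refl)
    fix q p assume "q \<in> {..<length B}" "p \<in> {..<q}"
    then have "B ! p \<le> B ! q"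
      using assms by (simp add: sorted_iff_nth_mono)
    then show "int (B ! p * B ! q - min (B ! p) (B ! q)) = int (B ! p) * (int (B ! q) - 1)"
      by (cases "B ! q") (simp_all add: algebra_simps)
  qed
  then show ?thesis
    using pair_sum_root_squares_identity[of "\<lambda>p. int (B ! p)" "length B"]
    by (simp add: sum_list_map_root_vector sum_list_sum_nth atLeast0LessThan)
qed

lemma rook_equiv_root_vector_power_sums:
  assumes "ferrers B1" "ferrers B2" "length B1 = length B2" "rook_equiv B1 B2"
  shows "sum_list (root_vector B1) = sum_list (root_vector B2)"
    and "sum_list (map (\<lambda>z. z\<^sup>2) (root_vector B1)) = sum_list (map (\<lambda>z. z\<^sup>2) (root_vector B2))"
proof -
  have sums_eq: "sum_list B1 = sum_list B2"
    using assms(4) by (simp add: rook_equiv_def flip: rook_number_1)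
  have "rook_number B1 2 = rook_number B2 2"
    using assms(4) by (simp add: rook_equiv_def)
  from sums_eq show "sum_list (root_vector B1) = sum_list (root_vector B2)"
    using assms(3) by (simp add: sum_list_root_vector)
  show "sum_list (map (\<lambda>z. z\<^sup>2) (root_vector B1)) = sum_list (map (\<lambda>z. z\<^sup>2) (root_vector B2))"
    using sum_squares_root_vector assms(1-3) sums_eq \<open>rook_number B1 2 = rook_number B2 2\<close>
    by (metis ferrers_def add_left_cancel)
qed

lemma rook_edge_root_vector:
  assumes "rook_edge B1 B2"
  obtains i j k where "i < length B1" "j < length B1" "i \<noteq> j" "k > 0"
    and "root_vector B2 =
      (root_vector B1)[i := root_vector B1 ! i + int k, j := root_vector B1 ! j - int k]"
proof -
  obtain i j k where ijk: "i < length B1" "j < length B1" "i \<noteq> j" "k > 0"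
    "B1 ! i = B2 ! i + k" "B1 ! j + k = B2 ! j"
    "\<forall>l<length B1. l \<noteq> i \<longrightarrow> l \<noteq> j \<longrightarrow> B1 ! l = B2 ! l"
    and len: "length B1 = length B2"
    using assms unfolding rook_edge_def by blast
  have "root_vector B2 =
      (root_vector B1)[i := root_vector B1 ! i + int k, j := root_vector B1 ! j - int k]"
    using ijk len by (intro nth_equalityI) (auto simp: nth_list_update)
  with ijk(1-4) show ?thesis
    by (rule that)
qed

lemma sum_list_update_group:
  fixes xs :: "'a::ab_group_add list"
  shows "k < length xs \<Longrightarrow> sum_list (xs[k := x]) = sum_list xs + x - xs ! k"
  by (induction xs arbitrary: k) (auto split: nat.split)

lemma eq_swap_of_eq_sum_and_sum_squares:
  fixes x y x' y' :: "'a::{idom, ring_char_0}"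
  assumes "x + y = x' + y'" and "x\<^sup>2 + y\<^sup>2 = x'\<^sup>2 + y'\<^sup>2" and "x' \<noteq> x"
  shows "x' = y \<and> y' = x"
proof -
  have y': "y' = x + y - x'"
    using assms(1) by (simp add: algebra_simps)
  have "2 * ((x' - x) * (x' - y)) = 0"
    using assms(2) unfolding y' by (simp add: power2_eq_square algebra_simps)
  with assms(3) have "x' = y"
    by simp
  with y' show ?thesis
    by simp
qed

lemma list_update_two_power_sums_eq:
  fixes zs :: "'a::{idom, ring_char_0} list"
  assumes "i < length zs" "j < length zs" "i \<noteq> j" "x \<noteq> zs ! i"
    and "sum_list (zs[i := x, j := y]) = sum_list zs"
    and "sum_list (map (\<lambda>z. z\<^sup>2) (zs[i := x, j := y])) = sum_list (map (\<lambda>z. z\<^sup>2) zs)"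
  shows "x = zs ! j \<and> y = zs ! i"
proof (rule eq_swap_of_eq_sum_and_sum_squares)
  show "zs ! i + zs ! j = x + y"
    using assms(5) assms(1-3) by (simp add: sum_list_update_group nth_list_update algebra_simps)
  show "(zs ! i)\<^sup>2 + (zs ! j)\<^sup>2 = x\<^sup>2 + y\<^sup>2"
    using assms(6) assms(1-3)
    by (simp add: map_update sum_list_update_group nth_list_update algebra_simps)
qed (use assms(4) in simp)

theorem theorem6:
  fixes B1 B2 :: "nat list" and n :: nat
  assumes "ferrers B1" and "ferrers B2"
    and "length B1 = n" and "length B2 = n"
    and "rook_equiv B1 B2"
    and "rook_edge B1 B2"
  shows "\<exists>i1 i2. i1 < i2 \<and> i2 < n \<and>
           root_vector B1 ! i1 \<noteq> root_vector B1 ! i2 \<and>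
           root_vector B2 = (root_vector B1)[i1 := root_vector B1 ! i2, i2 := root_vector B1 ! i1]"
proof -
  let ?z = "root_vector B1"
  obtain i j k where ij: "i < n" "j < n" "i \<noteq> j" and "k > 0"
    and edge: "root_vector B2 = ?z[i := ?z ! i + int k, j := ?z ! j - int k]"
    using rook_edge_root_vector[OF assms(6)] assms(3) by metis
  have "?z ! i + int k = ?z ! j \<and> ?z ! j - int k = ?z ! i"
    using list_update_two_power_sums_eq[of i ?z j "?z ! i + int k"] ij \<open>k > 0\<close> assms(3,4)
      rook_equiv_root_vector_power_sums[OF assms(1,2) _ assms(5)]
    by (simp add: edge)
  then have distinct: "?z ! i \<noteq> ?z ! j" and swap: "root_vector B2 = ?z[i := ?z ! j, j := ?z ! i]"
    using \<open>k > 0\<close> edge by auto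
  show ?thesis
  proof (cases "i < j")
    case True
    with ij distinct swap show ?thesis by blast
  next
    case False
    with ij distinct swap show ?thesis
      by (metis linorder_neqE_nat list_update_swap)
  qed
qed

end
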